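(* Let $\mathcal{T}_1$ be a channelled transition system with transition relation $R_1$ and let $\mathcal{T}$ be any channelled transition system. For every reachable state $(s_1,s)$ of $\mathcal{T}_1\|\mathcal{T}$, if $(s_1,(\upsilon,!,\star),s_1')\in R_1$ then there exists a state $s'$ of $\mathcal{T}$ such that $((s_1,s),(\upsilon,!,\star),(s_1',s'))$ belongs to the transition relation of $\mathcal{T}_1\|\mathcal{T}$.
   Context: A channelled transition system (CTS) is a tuple $\mathcal{T}=\langle C,\Sigma,\Upsilon,S,S_0,R,L,\mathsf{ls}\rangle$ where $C$ is a set of channels containing a distinguished broadcast channel $\star$, $\Sigma$ is a state alphabet, $\Upsilon=\Upsilon^+\times\{!,?\}\times C$ for some set $\Upsilon^+$ (a label $(\upsilon,!,c)$ is a send and $(\upsilon,?,c)$ a receive of $\upsilon$ on channel $c$), $S$ is a set of states, $S_0\subseteq S$ the initial states, $R\subseteq S\times\Upsilon\times S$ the transition relation, $L:S\to\Sigma$ a labelling, and $\mathsf{ls}:S\to 2^C$ a listening function with $\star\in\mathsf{ls}(s)$ for all $s$. A state of a CTS is reachable if it lies on a finite sequence $s_0,a_0,s_1,\dots,s_n$ with $s_0\in S_0$ and $(s_j,a_j,s_{j+1})\in R$. The composition of $\mathcal{T}_i=\langle C_i,\Sigma_i,\Upsilon_i,S_i,S_0^i,R_i,L_i,\mathsf{ls}^i\rangle$ ($i=1,2$) is $\mathcal{T}_1\|\mathcal{T}_2=\langle C_1\cup C_2,\Sigma_1\times\Sigma_2,\Upsilon_1\cup\Upsilon_2,S_1\times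 S_2,S_0^1\times S_0^2,R,L,\mathsf{ls}\rangle$ with $L(s_1,s_2)=(L_1(s_1),L_2(s_2))$, $\mathsf{ls}(s_1,s_2)=\mathsf{ls}^1(s_1)\cup\mathsf{ls}^2(s_2)$, and $R$ the union of: (1) triples $((s_1,s_2),(\upsilon,!,c),(s_1',s_2'))$ such that one of: $(s_1,(\upsilon,!,c),s_1')\in R_1$ and $(s_2,(\upsilon,?,c),s_2')\in R_2$; or $(s_1,(\upsilon,?,c),s_1')\in R_1$ and $(s_2,(\upsilon,!,c),s_2')\in R_2$; or $(s_1,(\upsilon,!,c),s_1')\in R_1$, $c\notin\mathsf{ls}^2(s_2)$ and $s_2=s_2'$; or $c\notin\mathsf{ls}^1(s_1)$, $s_1=s_1'$ and $(s_2,(\upsilon,!,c),s_2')\in R_2$; (2) triples $((s_1,s_2),(\upsilon,?,c),(s_1',s_2'))$ such that one of: $(s_1,(\upsilon,?,c),s_1')\in R_1$ and $(s_2,(\upsilon,?,c),s_2')\in R_2$; or $(s_1,(\upsilon,?,c),s_1')\in R_1$, $c\notin\mathsf{ls}^2(s_2)$ and $s_2=s_2'$; or $c\notin\mathsf{ls}^1(s_1)$, $s_1=s_1'$ and $(s_2,(\upsilon,?,c),s_2')\in R_2$; (3) triples $((s_1,s_2),(\upsilon,\gamma,\star),(s_1',s_2'))$ with $\gamma\in\{!,?\}$ such that either $(s_1,(\upsilon,\gamma,\star),s_1')\in R_1$, $s_2=s_2'$ and there is no $s_2''$ with $(s_2,(\upsilon,?,\star),s_2'')\in R_2$; or $s_1=s_1'$,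 there is no $s_1''$ with $(s_1,(\upsilon,?,\star),s_1'')\in R_1$, and $(s_2,(\upsilon,\gamma,\star),s_2')\in R_2$. *)

theory Defs
  imports Main
begin

datatype dir = Send | Recv

type_synonym ('u,'c) act = "'u \<times> dir \<times> 'c"

record ('c,'l,'u,'s) cts =
  chans :: "'c set"
  alph  :: "'l set"
  acts  :: "('u,'c) act set"
  states :: "'s set"
  init  :: "'s set"
  trans :: "('s \<times> ('u,'c) act \<times> 's) set"
  lab   :: "'s \<Rightarrow> 'l"
  ls    :: "'s \<Rightarrow> 'c set"

definition is_cts :: "'c \<Rightarrow> ('c,'l,'u,'s) cts \<Rightarrow> bool" where
  "is_cts bc T \<longleftrightarrow>
     bc \<in> chans T \<and>
     (\<exists>U. acts T = U \<times> UNIV \<times> chans T) \<and>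
     init T \<subseteq> states T \<and>
     trans T \<subseteq> states T \<times> acts T \<times> states T \<and>
     (\<forall>s\<in>states T. lab T s \<in> alph T) \<and>
     (\<forall>s\<in>states T. ls T s \<subseteq> chans T \<and> bc \<in> ls T s)"

inductive_set reach :: "('c,'l,'u,'s) cts \<Rightarrow> 's set" for T where
  init: "s \<in> init T \<Longrightarrow> s \<in> reach T"
| step: "s \<in> reach T \<Longrightarrow> (s, a, s') \<in> trans T \<Longrightarrow> s' \<in> reach T"

definition comp_trans ::
  "'c \<Rightarrow> ('c,'l1,'u,'s1) cts \<Rightarrow> ('c,'l2,'u,'s2) cts \<Rightarrow>
   (('s1 \<times> 's2) \<times> ('u,'c) act \<times> ('s1 \<times> 's2)) set" where
  "comp_trans bc T1 T2 =
    {((s1,s2),(u,Send,c),(s1',s2')) | s1 s2 u c s1' s2'.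
        ((s1,(u,Send,c),s1') \<in> trans T1 \<and> (s2,(u,Recv,c),s2') \<in> trans T2)
      \<or> ((s1,(u,Recv,c),s1') \<in> trans T1 \<and> (s2,(u,Send,c),s2') \<in> trans T2)
      \<or> ((s1,(u,Send,c),s1') \<in> trans T1 \<and> c \<notin> ls T2 s2 \<and> s2 = s2')
      \<or> (c \<notin> ls T1 s1 \<and> s1 = s1' \<and> (s2,(u,Send,c),s2') \<in> trans T2)}
  \<union> {((s1,s2),(u,Recv,c),(s1',s2')) | s1 s2 u c s1' s2'.
        ((s1,(u,Recv,c),s1') \<in> trans T1 \<and> (s2,(u,Recv,c),s2') \<in> trans T2)
      \<or> ((s1,(u,Recv,c),s1') \<in> trans T1 \<and> c \<notin> ls T2 s2 \<and> s2 = s2')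
      \<or> (c \<notin> ls T1 s1 \<and> s1 = s1' \<and> (s2,(u,Recv,c),s2') \<in> trans T2)}
  \<union> {((s1,s2),(u,g,bc),(s1',s2')) | s1 s2 u g s1' s2'.
        ((s1,(u,g,bc),s1') \<in> trans T1 \<and> s2 = s2' \<and>
           \<not> (\<exists>s2''. (s2,(u,Recv,bc),s2'') \<in> trans T2))
      \<or> (s1 = s1' \<and> \<not> (\<exists>s1''. (s1,(u,Recv,bc),s1'') \<in> trans T1) \<and>
           (s2,(u,g,bc),s2') \<in> trans T2)}"

definition compose ::
  "'c \<Rightarrow> ('c,'l1,'u,'s1) cts \<Rightarrow> ('c,'l2,'u,'s2) cts \<Rightarrow> ('c,'l1\<times>'l2,'u,'s1\<times>'s2) cts" where
  "compose bc T1 T2 = \<lparr> chans = chans T1 \<union> chans T2,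
     alph = alph T1 \<times> alph T2,
     acts = acts T1 \<union> acts T2,
     states = states T1 \<times> states T2,
     init = init T1 \<times> init T2,
     trans = comp_trans bc T1 T2,
     lab = (\<lambda>(s1,s2). (lab T1 s1, lab T2 s2)),
     ls = (\<lambda>(s1,s2). ls T1 s1 \<union> ls T2 s2) \<rparr>"

end

theory Submission
  imports Defs
begin

(* A broadcast send of T1 is never blocked by its partner: if T can receive the message on the
   broadcast channel, the two synchronise; otherwise the broadcast clause lets T1 move alone
   while T stays put. Reachability is needed only to know that the unchanged state of T is a
   genuine state of T. *)

lemma states_compose [simp]: "states (compose bc T1 T2) = states T1 \<times> states T2"
  and init_compose [simp]: "init (compose bc T1 T2) = init T1 \<times> init T2"
  and trans_compose [simp]: "trans (compose bc T1 T2) = comp_trans bc T1 T2"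
  by (simp_all add: compose_def)

lemma reach_subset_states:
  assumes "init T \<subseteq> states T"
    and "\<And>s a s'. s \<in> states T \<Longrightarrow> (s, a, s') \<in> trans T \<Longrightarrow> s' \<in> states T"
  shows "reach T \<subseteq> states T"
proof
  fix s assume "s \<in> reach T"
  then show "s \<in> states T"
    by induction (use assms in blast)+
qed

lemma trans_target_in_states:
  assumes "is_cts bc T" and "(s, a, s') \<in> trans T"
  shows "s' \<in> states T"
  using assms unfolding is_cts_def by blast

lemma comp_trans_target_in_states:
  assumes "is_cts bc T1" and "is_cts bc T2"
    and "(s1, s2) \<in> states T1 \<times> states T2"
    and "((s1, s2), a, (s1', s2')) \<in> comp_trans bc T1 T2"
  shows "(s1', s2') \<in> states T1 \<times> states T2"
  using assms(3,4) trans_target_in_states[OF assms(1)] trans_target_in_states[OF assms(2)]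
  unfolding comp_trans_def by blast

lemma reach_compose_subset_states:
  assumes "is_cts bc T1" and "is_cts bc T2"
  shows "reach (compose bc T1 T2) \<subseteq> states T1 \<times> states T2"
proof -
  have "reach (compose bc T1 T2) \<subseteq> states (compose bc T1 T2)"
  proof (rule reach_subset_states)
    show "init (compose bc T1 T2) \<subseteq> states (compose bc T1 T2)"
      using assms unfolding is_cts_def by auto
    show "s' \<in> states (compose bc T1 T2)"
      if "s \<in> states (compose bc T1 T2)" and "(s, a, s') \<in> trans (compose bc T1 T2)"
      for s a s'
      using that comp_trans_target_in_states[OF assms, of "fst s" "snd s" a "fst s'" "snd s'"]
      by simp
  qed
  then show ?thesis by simp
qed

lemma comp_trans_broadcast_sync:
  assumes "(s1, (u, Send, bc), s1') \<in> trans T1"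
    and "(s2, (u, Recv, bc), s2') \<in> trans T2"
  shows "((s1, s2), (u, Send, bc), (s1', s2')) \<in> comp_trans bc T1 T2"
  using assms unfolding comp_trans_def by blast

lemma comp_trans_broadcast_alone:
  assumes "(s1, (u, Send, bc), s1') \<in> trans T1"
    and "\<nexists>s2'. (s2, (u, Recv, bc), s2') \<in> trans T2"
  shows "((s1, s2), (u, Send, bc), (s1', s2)) \<in> comp_trans bc T1 T2"
  using assms unfolding comp_trans_def by blast

theorem mainTheorem2:
  fixes bc :: 'c
    and T1 :: "('c,'l1,'u,'s1) cts" and T :: "('c,'l2,'u,'s2) cts"
  assumes "is_cts bc T1" and "is_cts bc T"
    and "(s1, s) \<in> reach (compose bc T1 T)"
    and "(s1, (u, Send, bc), s1') \<in> trans T1"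
  shows "\<exists>s'\<in>states T. ((s1, s), (u, Send, bc), (s1', s')) \<in> trans (compose bc T1 T)"
proof (cases "\<exists>s'. (s, (u, Recv, bc), s') \<in> trans T")
  case True
  then obtain s' where receive: "(s, (u, Recv, bc), s') \<in> trans T" ..
  have "s' \<in> states T"
    using trans_target_in_states[OF assms(2) receive] .
  with comp_trans_broadcast_sync[OF assms(4) receive] show ?thesis
    by auto
next
  case False
  have "s \<in> states T"
    using reach_compose_subset_states[OF assms(1,2)] assms(3) by auto
  with comp_trans_broadcast_alone[OF assms(4) False] show ?thesis
    by auto
qed

end
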